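(* Let $b\ge1$, $k\in\mathbb{N}$, and let $A\subseteq\mathbb{N}$ with $\min(A)=0$ and $\max(A)\le k$. Let $f\in\mathcal{M}^b$ have set-array representation $(A,\emptyset,\ldots,\emptyset)$. Then $d(f)\le d([k]_b)$, and the inequality is strict for $f\neq[k]_b$.
   Context: $\mathbb{N}=\{0,1,\ldots\}$, $[k]=\{0,\ldots,k\}$. $\mathcal{M}^b$ is the set of finitely supported functions $f:\mathbb{N}\to\{0,\ldots,b\}$; its set-array representation is $(A_1,\ldots,A_b)$ with $A_i=\{a:f(a)\ge i\}$. Multiset addition is coordinatewise on set arrays: $(A_i)_i+(B_i)_i=(A_i+B_i)_i$, with $S+T=\{s+t:s\in S,t\in T\}$ and $S+\emptyset=\emptyset$. $g$ is a divisor of $f$ if $f=g+h$ for some $h\in\mathcal{M}^b$; $d(f)$ is the number of divisors of $f$. $[k]_b$ is the multiset with set-array representation $([k],\emptyset,\ldots,\emptyset)$. *)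

theory Defs
  imports Main
begin

definition Mb :: "nat \<Rightarrow> (nat \<Rightarrow> nat) set" where
  "Mb b = {f. finite {a. f a \<noteq> 0} \<and> (\<forall>a. f a \<le> b)}"

text \<open>i-th set of the set-array representation: A_i = {a. f a >= i}.\<close>
definition level :: "(nat \<Rightarrow> nat) \<Rightarrow> nat \<Rightarrow> nat set" where
  "level f i = {a. f a \<ge> i}"

definition sumset :: "nat set \<Rightarrow> nat set \<Rightarrow> nat set" where
  "sumset S T = {s + t |s t. s \<in> S \<and> t \<in> T}"

text \<open>f = g + h in M^b: coordinatewise sumset addition of set arrays.\<close>
definition ms_sum_eq :: "nat \<Rightarrow> (nat \<Rightarrow> nat) \<Rightarrow> (nat \<Rightarrow> nat) \<Rightarrow> (nat \<Rightarrow> nat) \<Rightarrow> bool" where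
  "ms_sum_eq b f g h \<longleftrightarrow> (\<forall>i\<in>{1..b}. level f i = sumset (level g i) (level h i))"

definition is_divisor :: "nat \<Rightarrow> (nat \<Rightarrow> nat) \<Rightarrow> (nat \<Rightarrow> nat) \<Rightarrow> bool" where
  "is_divisor b g f \<longleftrightarrow> g \<in> Mb b \<and> (\<exists>h\<in>Mb b. ms_sum_eq b f g h)"

definition num_divisors :: "nat \<Rightarrow> (nat \<Rightarrow> nat) \<Rightarrow> nat" where
  "num_divisors b f = card {g. is_divisor b g f}"

text \<open>[k]_b: set array ([k], {}, ..., {}), i.e. indicator of {0..k}.\<close>
definition interval_ms :: "nat \<Rightarrow> nat \<Rightarrow> nat" where
  "interval_ms k = (\<lambda>a. if a \<le> k then 1 else 0)"

end

(* A divisor g of f has a support G with A = G + H for some H; as 0 lies in A, also 0 lies in H,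
   so G is contained in A.  Filling in value 1 at the points of [0, max G] outside A turns g into
   a divisor of [k]_b, because the filled support plus [0, k - max G] is [0, k].  This map leaves
   g unchanged on A, hence is injective on the divisors of f.  When some x in [0, k] is missing
   from A, the divisor [x]_b of [k]_b is not in its image, since every filled divisor has its
   largest support point in A. *)

theory Submission
  imports Defs
begin

lemma sumsetI: "s \<in> S \<Longrightarrow> t \<in> T \<Longrightarrow> a = s + t \<Longrightarrow> a \<in> sumset S T"
  unfolding sumset_def by blast

lemma sumsetE:
  assumes "a \<in> sumset S T"
  obtains s t where "s \<in> S" "t \<in> T" "a = s + t"
  using assms unfolding sumset_def by blast

lemma sumset_empty_right [simp]: "sumset S {} = {}"
  by (simp add: sumset_def)

lemma sumset_atMost_atMost: "sumset {..m} {..n} = {..m + n :: nat}"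
proof -
  have "a \<in> sumset {..m} {..n}" if "a \<le> m + n" for a
    using that by (cases "a \<le> m") (auto intro: sumsetI[of a _ 0] sumsetI[of m _ "a - m"])
  then show ?thesis by (auto elim: sumsetE)
qed

lemma zero_in_sumsetD:
  assumes "0 \<in> sumset S T"
  shows "0 \<in> S" "0 \<in> T"
  using assms by (auto elim: sumsetE)

lemma subset_sumset: "0 \<in> T \<Longrightarrow> S \<subseteq> sumset S T"
  by (auto intro: sumsetI[of _ _ 0])

lemma level_1_eq: "level g 1 = {a. g a \<noteq> 0}"
  by (auto simp: level_def)

lemma level_interval_ms:
  "i \<ge> 1 \<Longrightarrow> level (interval_ms k) i = (if i = 1 then {..k} else {})"
  by (auto simp: level_def interval_ms_def)

lemma interval_ms_in_Mb: "b \<ge> 1 \<Longrightarrow> interval_ms k \<in> Mb b"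
  unfolding Mb_def interval_ms_def by (auto intro: finite_subset[of _ "{..k}"])

lemma finite_level_1: "f \<in> Mb b \<Longrightarrow> finite (level f 1)"
  unfolding Mb_def level_1_eq by simp

lemma interval_ms_eq_iff:
  assumes "\<forall>a. f a \<le> 1"
  shows "f = interval_ms k \<longleftrightarrow> level f 1 = {..k}"
proof
  assume "level f 1 = {..k}"
  have "f a = interval_ms k a" for a
  proof -
    have "f a \<noteq> 0 \<longleftrightarrow> a \<le> k"
      using \<open>level f 1 = {..k}\<close> unfolding level_1_eq set_eq_iff by simp
    then show ?thesis using assms[rule_format, of a] by (auto simp: interval_ms_def)
  qed
  then show "f = interval_ms k" ..
qed (simp add: level_interval_ms)

lemma is_divisor_level_1:
  assumes "is_divisor b g f" "b \<ge> 1"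
  obtains H where "level f 1 = sumset (level g 1) H"
  using assms unfolding is_divisor_def ms_sum_eq_def by auto

lemma divisor_level_1_subset:
  assumes "is_divisor b g f" "b \<ge> 1" "0 \<in> level f 1"
  shows "level g 1 \<subseteq> level f 1"
  by (metis assms is_divisor_level_1 subset_sumset zero_in_sumsetD(2))

lemma finite_divisors:
  assumes "b \<ge> 1" "f \<in> Mb b" "0 \<in> level f 1"
  shows "finite {g. is_divisor b g f}"
proof (rule finite_subset)
  let ?S = "level f 1"
  show "{g. is_divisor b g f} \<subseteq> {g. \<forall>a. (a \<in> ?S \<longrightarrow> g a \<in> {..b}) \<and> (a \<notin> ?S \<longrightarrow> g a = 0)}"
  proof (intro subsetI CollectI allI conjI impI)
    fix g a assume "g \<in> {g. is_divisor b g f}"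
    then have g: "is_divisor b g f" by simp
    then show "g a \<in> {..b}" by (simp add: is_divisor_def Mb_def)
    assume "a \<notin> ?S"
    with divisor_level_1_subset[OF g assms(1,3)] show "g a = 0" unfolding level_1_eq by blast
  qed
  show "finite {g. \<forall>a. (a \<in> ?S \<longrightarrow> g a \<in> {..b}) \<and> (a \<notin> ?S \<longrightarrow> g a = 0)}"
    using finite_level_1[OF assms(2)] by (intro finite_set_of_finite_funs) auto
qed

lemma is_divisor_interval_msI:
  assumes "b \<ge> 1" "g \<in> Mb b" "sumset (level g 1) {..j} = {..k}"
  shows "is_divisor b g (interval_ms k)"
proof -
  have "ms_sum_eq b (interval_ms k) g (interval_ms j)"
    using assms(3) by (auto simp: ms_sum_eq_def level_interval_ms)
  then show ?thesis
    using assms(1,2) interval_ms_in_Mb unfolding is_divisor_def by blast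
qed

lemma interval_ms_divisor:
  "b \<ge> 1 \<Longrightarrow> j \<le> k \<Longrightarrow> is_divisor b (interval_ms j) (interval_ms k)"
  by (rule is_divisor_interval_msI[where j = "k - j"])
    (simp_all add: interval_ms_in_Mb level_interval_ms sumset_atMost_atMost)

definition fill_gaps :: "nat set \<Rightarrow> (nat \<Rightarrow> nat) \<Rightarrow> nat \<Rightarrow> nat" where
  "fill_gaps A g a =
    (if g a \<noteq> 0 then g a else if a \<notin> A \<and> (\<exists>c\<ge>a. g c \<noteq> 0) then 1 else 0)"

lemma fill_gaps_eq [simp]: "a \<in> A \<Longrightarrow> fill_gaps A g a = g a"
  by (simp add: fill_gaps_def)

lemma level_1_fill_gaps:
  assumes "finite (level g 1)" "level g 1 \<noteq> {}"
  shows "level (fill_gaps A g) 1 = level g 1 \<union> ({..Max (level g 1)} - A)"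
proof -
  have "(\<exists>c\<ge>a. g c \<noteq> 0) \<longleftrightarrow> a \<le> Max (level g 1)" for a
    using Max_ge[OF assms(1)] Max_in[OF assms] unfolding level_1_eq by (auto intro: le_trans)
  then show ?thesis unfolding level_1_eq by (auto simp: fill_gaps_def)
qed

lemma fill_gaps_in_Mb:
  assumes "b \<ge> 1" "g \<in> Mb b" "level g 1 \<noteq> {}"
  shows "fill_gaps A g \<in> Mb b"
proof -
  have "finite (level (fill_gaps A g) 1)"
    using level_1_fill_gaps[OF finite_level_1[OF assms(2)] assms(3)] finite_level_1[OF assms(2)]
    by simp
  moreover have "fill_gaps A g a \<le> b" for a
    using assms(1,2) by (simp add: fill_gaps_def Mb_def)
  ultimately show ?thesis unfolding Mb_def level_1_eq[symmetric] by blast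
qed

lemma fill_gaps_divisor_interval_ms:
  assumes "b \<ge> 1" "g \<in> Mb b" "A = sumset (level g 1) H" "A \<noteq> {}" "A \<subseteq> {..k}"
  shows "is_divisor b (fill_gaps A g) (interval_ms k)"
proof -
  let ?G = "level g 1"
  define M where "M = Max ?G"
  have "?G \<noteq> {}" "H \<noteq> {}" using assms(3,4) by (auto simp: sumset_def)
  have fin: "finite ?G" using finite_level_1[OF assms(2)] .
  have M: "M \<in> ?G" "\<And>a. a \<in> ?G \<Longrightarrow> a \<le> M"
    using Max_in[OF fin \<open>?G \<noteq> {}\<close>] Max_ge[OF fin] by (simp_all add: M_def)
  have M_plus_le: "M + t \<le> k" if "t \<in> H" for t
    using sumsetI[OF M(1) that refl] assms(3,5) by auto
  then have H_le: "t \<le> k - M" if "t \<in> H" for t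
    using that by force
  have "M \<le> k" using M_plus_le \<open>H \<noteq> {}\<close> by force
  have level_fill: "level (fill_gaps A g) 1 = ?G \<union> ({..M} - A)"
    using level_1_fill_gaps[OF fin \<open>?G \<noteq> {}\<close>] by (simp add: M_def)
  have "sumset (level (fill_gaps A g) 1) {..k - M} = {..k}"
  proof (intro equalityI subsetI)
    fix x assume "x \<in> sumset (level (fill_gaps A g) 1) {..k - M}"
    then obtain s t where "s \<in> level (fill_gaps A g) 1" "t \<le> k - M" "x = s + t"
      by (auto elim: sumsetE)
    moreover from this(1) have "s \<le> M" using M(2) level_fill by auto
    ultimately show "x \<in> {..k}" using \<open>M \<le> k\<close> by auto
  next
    fix x assume "x \<in> {..k}"
    consider "x \<in> A" | "x \<notin> A" "x \<le> M" | "M < x" by force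
    then show "x \<in> sumset (level (fill_gaps A g) 1) {..k - M}"
    proof cases
      case 1
      then show ?thesis using assms(3) H_le level_fill by (auto intro: sumsetI elim!: sumsetE)
    next
      case 2
      then show ?thesis using level_fill by (auto intro: sumsetI[of x _ 0])
    next
      case 3
      then show ?thesis using M(1) \<open>x \<in> {..k}\<close> level_fill by (auto intro: sumsetI[of M _ "x - M"])
    qed
  qed
  then show ?thesis
    using is_divisor_interval_msI assms(1) fill_gaps_in_Mb[OF assms(1,2) \<open>?G \<noteq> {}\<close>] by blast
qed

lemma inj_on_fill_gaps: "inj_on (fill_gaps A) {g. level g 1 \<subseteq> A}"
proof (rule inj_onI)
  fix g h assume "g \<in> {g. level g 1 \<subseteq> A}" "h \<in> {g. level g 1 \<subseteq> A}" "fill_gaps A g = fill_gaps A h"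
  then have "g a = h a" for a
  proof (cases "a \<in> A")
    case False
    with \<open>g \<in> _\<close> \<open>h \<in> _\<close> have "g a = 0" "h a = 0" unfolding level_1_eq by blast+
    then show ?thesis by simp
  qed (metis fill_gaps_eq)
  then show "g = h" ..
qed

(* The last nonzero point of fill_gaps A g lies in A, that of interval_ms x is x. *)
lemma fill_gaps_neq_interval_ms:
  assumes "level g 1 \<subseteq> A" "x \<notin> A"
  shows "fill_gaps A g \<noteq> interval_ms x"
proof
  assume eq: "fill_gaps A g = interval_ms x"
  then have "fill_gaps A g x \<noteq> 0" by (simp add: interval_ms_def)
  then obtain c where "c \<ge> x" "g c \<noteq> 0"
    using assms unfolding fill_gaps_def level_1_eq by (auto split: if_splits)
  moreover have "c \<in> A" using \<open>g c \<noteq> 0\<close> assms(1) unfolding level_1_eq by blast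
  moreover have "c \<noteq> x" using \<open>c \<in> A\<close> assms(2) by blast
  ultimately have "c > x" "fill_gaps A g c \<noteq> 0" by auto
  then show False using eq by (simp add: interval_ms_def)
qed

lemma num_divisors_le_interval_ms:
  assumes "b \<ge> 1" "0 \<in> level f 1" "level f 1 \<subseteq> {..k}"
  shows "num_divisors b f \<le> num_divisors b (interval_ms k)"
    and "\<not> {..k} \<subseteq> level f 1 \<Longrightarrow> num_divisors b f < num_divisors b (interval_ms k)"
proof -
  let ?A = "level f 1"
  let ?D = "{g. is_divisor b g f}" and ?Dk = "{g. is_divisor b g (interval_ms k)}"
  have D_sub: "?D \<subseteq> {g. level g 1 \<subseteq> ?A}"
    using divisor_level_1_subset[OF _ assms(1,2)] by blast
  have inj: "inj_on (fill_gaps ?A) ?D"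
    by (rule inj_on_subset[OF inj_on_fill_gaps D_sub])
  have image: "fill_gaps ?A ` ?D \<subseteq> ?Dk"
  proof (rule image_subsetI)
    fix g assume "g \<in> ?D"
    then have g: "is_divisor b g f" by simp
    obtain H where H: "?A = sumset (level g 1) H" using is_divisor_level_1[OF g assms(1)] .
    have "g \<in> Mb b" using g by (simp add: is_divisor_def)
    from fill_gaps_divisor_interval_ms[OF assms(1) this H _ assms(3)] assms(2)
    show "fill_gaps ?A g \<in> ?Dk" by auto
  qed
  have fin: "finite ?Dk"
    using finite_divisors[OF assms(1) interval_ms_in_Mb[OF assms(1)]]
    by (simp add: level_interval_ms)
  show "num_divisors b f \<le> num_divisors b (interval_ms k)"
    unfolding num_divisors_def by (rule card_inj_on_le[OF inj image fin])
  show "num_divisors b f < num_divisors b (interval_ms k)" if gap: "\<not> {..k} \<subseteq> ?A"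
  proof -
    obtain x where "x \<le> k" "x \<notin> ?A" using gap by auto
    have "interval_ms x \<in> ?Dk" using interval_ms_divisor[OF assms(1) \<open>x \<le> k\<close>] by simp
    moreover have "interval_ms x \<notin> fill_gaps ?A ` ?D"
    proof
      assume "interval_ms x \<in> fill_gaps ?A ` ?D"
      then obtain g where g: "g \<in> ?D" "fill_gaps ?A g = interval_ms x" by (rule imageE) simp
      from subsetD[OF D_sub g(1)] have "level g 1 \<subseteq> ?A" by simp
      from fill_gaps_neq_interval_ms[OF this \<open>x \<notin> ?A\<close>] g(2) show False by contradiction
    qed
    ultimately have "fill_gaps ?A ` ?D \<noteq> ?Dk" by blast
    with image have "fill_gaps ?A ` ?D \<subset> ?Dk" by (rule psubsetI)
    then have "card (fill_gaps ?A ` ?D) < card ?Dk" by (rule psubset_card_mono[OF fin])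
    then show ?thesis unfolding num_divisors_def card_image[OF inj] .
  qed
qed

theorem mainTheorem20:
  fixes b k :: nat and A :: "nat set" and f :: "nat \<Rightarrow> nat"
  assumes "b \<ge> 1"
    and "A \<noteq> {}" and "Min A = 0" and "\<forall>a\<in>A. a \<le> k"
    and "f \<in> Mb b"
    and "level f 1 = A" and "\<forall>i\<in>{2..b}. level f i = {}"
  shows "num_divisors b f \<le> num_divisors b (interval_ms k)
    \<and> (f \<noteq> interval_ms k \<longrightarrow> num_divisors b f < num_divisors b (interval_ms k))"
proof -
  have A_le: "A \<subseteq> {..k}" using assms(4) by auto
  have "0 \<in> A"
    using Min_in[OF finite_subset[OF A_le finite_atMost] assms(2)] assms(3) by simp
  have "f a \<le> 1" for a
  proof (cases "b \<ge> 2")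
    case True
    then have "a \<notin> level f 2" using assms(7) by auto
    then show ?thesis by (simp add: level_def)
  next
    case False
    moreover have "f a \<le> b" using assms(5) by (simp add: Mb_def)
    ultimately show ?thesis by linarith
  qed
  then have "\<not> {..k} \<subseteq> A" if "f \<noteq> interval_ms k"
    using that interval_ms_eq_iff[of f k] A_le assms(6) by auto
  with num_divisors_le_interval_ms[OF assms(1), of f k] \<open>0 \<in> A\<close> A_le show ?thesis
    unfolding assms(6) by simp
qed

end
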